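(* For integers $n\ge2$ and $r\ge2$, the windmill graph $W(n,r)$ admits a weak IASI and its sparing number is $\varphi(W(n,r))=\frac{r}{2}(n-1)(n-2)$.
   Context: The windmill graph $W(n,r)$ ($n\ge2$, $r\ge2$) is obtained by taking $r$ copies of the complete graph $K_n$ and identifying one vertex from each copy into a single shared vertex. Let $\mathbb{N}_0$ be the set of non-negative integers; for $A,B\subseteq\mathbb{N}_0$, $A+B=\{a+b:a\in A,b\in B\}$. An integer additive set-indexer (IASI) of a graph $G$ is an injective map $f:V(G)\to\mathcal{P}(\mathbb{N}_0)$ such that $f^+:E(G)\to\mathcal{P}(\mathbb{N}_0)$, $f^+(uv)=f(u)+f(v)$, is injective. A weak IASI is an IASI with $|f^+(uv)|=\max(|f(u)|,|f(v)|)$ for every edge $uv$. An edge $e$ is mono-indexed if $|f^+(e)|=1$. The sparing number $\varphi(G)$ is the minimum number of mono-indexed edges over all weak IASIs of $G$. *)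

theory Defs
  imports Complex_Main
begin

definition sumset :: "nat set \<Rightarrow> nat set \<Rightarrow> nat set" where
  "sumset A B = {a + b | a b. a \<in> A \<and> b \<in> B}"

text \<open>A simple graph is given by a vertex set V and a symmetric irreflexive adjacency
  relation adj (on V).\<close>

definition iasi :: "'v set \<Rightarrow> ('v \<Rightarrow> 'v \<Rightarrow> bool) \<Rightarrow> ('v \<Rightarrow> nat set) \<Rightarrow> bool" where
  "iasi V adj f \<longleftrightarrow>
     (\<forall>v\<in>V. finite (f v) \<and> f v \<noteq> {}) \<and>
     inj_on f V \<and>
     (\<forall>u v x y. adj u v \<longrightarrow> adj x y \<longrightarrow>
        sumset (f u) (f v) = sumset (f x) (f y) \<longrightarrow> {u, v} = {x, y})"

definition weak_iasi :: "'v set \<Rightarrow> ('v \<Rightarrow> 'v \<Rightarrow> bool) \<Rightarrow> ('v \<Rightarrow> nat set) \<Rightarrow> bool" where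
  "weak_iasi V adj f \<longleftrightarrow> iasi V adj f \<and>
     (\<forall>u v. adj u v \<longrightarrow> card (sumset (f u) (f v)) = max (card (f u)) (card (f v)))"

definition mono_edges :: "('v \<Rightarrow> 'v \<Rightarrow> bool) \<Rightarrow> ('v \<Rightarrow> nat set) \<Rightarrow> nat" where
  "mono_edges adj f = card {{u, v} | u v. adj u v \<and> card (sumset (f u) (f v)) = 1}"

definition sparing_number :: "'v set \<Rightarrow> ('v \<Rightarrow> 'v \<Rightarrow> bool) \<Rightarrow> nat" where
  "sparing_number V adj = Inf {mono_edges adj f | f. weak_iasi V adj f}"

text \<open>Windmill graph W(n,r): centre (0,0); vertex (i,j), 1 \<le> i \<le> r, 1 \<le> j \<le> n-1,
  is the j-th non-shared vertex of the i-th copy of K_n.\<close>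
definition windmill_V :: "nat \<Rightarrow> nat \<Rightarrow> (nat \<times> nat) set" where
  "windmill_V n r = insert (0, 0) ({1..r} \<times> {1..n - 1})"

definition windmill_adj :: "nat \<Rightarrow> nat \<Rightarrow> nat \<times> nat \<Rightarrow> nat \<times> nat \<Rightarrow> bool" where
  "windmill_adj n r u v \<longleftrightarrow> u \<in> windmill_V n r \<and> v \<in> windmill_V n r \<and> u \<noteq> v \<and>
     (fst u = fst v \<or> fst u = 0 \<or> fst v = 0)"

end

theory Submission
  imports Defs "HOL-Library.Nat_Bijection"
begin

(* Adjacent vertices of a weak IASI cannot both carry labels with two or more elements, since
   |A + B| > |A| whenever |B| \<ge> 2. Hence each of the r copies of K_n has at least n - 1 vertices
   with singleton labels, and the C(n-1, 2) edges among them are mono-indexed; distinct copies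
   share only the centre, so these edge sets are disjoint. Conversely, labelling the centre by
   {0, 1} and the other vertices by distinct powers of two gives a weak IASI whose mono-indexed
   edges are exactly those avoiding the centre: the largest element of each edge sumset is a sum
   of two distinct powers of two, and its binary digits identify the edge. *)

lemma finite_sumset:
  assumes "finite A" "finite B"
  shows "finite (sumset A B)"
proof -
  have "sumset A B = (\<lambda>(a, b). a + b) ` (A \<times> B)"
    unfolding sumset_def by auto
  then show ?thesis
    using assms by simp
qed

lemma sumset_commute: "sumset A B = sumset B A"
  unfolding sumset_def by (metis add.commute)

lemma sumset_singleton [simp]: "sumset {a} {b} = {a + b}"
  unfolding sumset_def by auto

lemma sumset_01_singleton [simp]: "sumset {0, 1} {x} = {x, x + 1}"
  unfolding sumset_def by auto

lemma sumset_singleton_01 [simp]: "sumset {x} {0, 1} = {x, x + 1}"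
  unfolding sumset_def by auto

lemma card_sumset_gt:
  assumes "finite A" "A \<noteq> {}" "finite B" "card B \<ge> 2"
  shows "card A < card (sumset A B)"
proof -
  have "B \<noteq> {}" using assms(4) by auto
  have "Min B \<noteq> Max B"
  proof
    assume "Min B = Max B"
    then have "B \<subseteq> {Min B}"
      using assms(3) by (metis Max_ge Min_le antisym insert_iff subsetI)
    then show False
      using assms(4) card_mono[of "{Min B}" B] by simp
  qed
  then have lt: "Min B < Max B"
    using assms(3) \<open>B \<noteq> {}\<close> by (simp add: order_less_le)
  have new: "Max A + Max B \<notin> (\<lambda>a. a + Min B) ` A"
    using assms(1) lt by (auto dest: Max_ge)
  have "insert (Max A + Max B) ((\<lambda>a. a + Min B) ` A) \<subseteq> sumset A B"
    using Max_in[OF assms(1,2)] Max_in[OF assms(3) \<open>B \<noteq> {}\<close>] Min_in[OF assms(3) \<open>B \<noteq> {}\<close>]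
    unfolding sumset_def by blast
  then have "card (insert (Max A + Max B) ((\<lambda>a. a + Min B) ` A)) \<le> card (sumset A B)"
    by (intro card_mono finite_sumset assms)
  then show ?thesis
    using new assms(1) by (simp add: card_image)
qed

lemma bits_two_powers:
  assumes "a \<noteq> b"
  shows "{k. bit ((2::nat) ^ a + 2 ^ b) k} = {a, b}"
  using assms by (auto simp: bit_disjunctive_add_iff bit_exp_iff)

lemma two_powers_sum_eqD:
  assumes "(2::nat) ^ a + 2 ^ b = 2 ^ c + 2 ^ d" "a \<noteq> b" "c \<noteq> d"
  shows "{a, b} = {c, d}"
  using bits_two_powers[OF assms(2)] bits_two_powers[OF assms(3)] assms(1) by simp

definition two_subsets :: "'a set \<Rightarrow> 'a set set" where
  "two_subsets S = {A. A \<subseteq> S \<and> card A = 2}"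

lemma card_UN_two_subsets:
  assumes "finite I" "\<And>i. i \<in> I \<Longrightarrow> finite (T i) \<and> card (T i) = m"
    and "\<And>i k. i \<in> I \<Longrightarrow> k \<in> I \<Longrightarrow> i \<noteq> k \<Longrightarrow> card (T i \<inter> T k) \<le> 1"
  shows "card (\<Union>i\<in>I. two_subsets (T i)) = card I * (m choose 2)"
proof -
  have "two_subsets (T i) \<inter> two_subsets (T k) = {}" if "i \<in> I" "k \<in> I" "i \<noteq> k" for i k
  proof -
    have "\<not> A \<subseteq> T i \<inter> T k" if "card A = 2" for A
      using assms(2,3) \<open>i \<in> I\<close> \<open>k \<in> I\<close> \<open>i \<noteq> k\<close> that card_mono[of "T i \<inter> T k" A]
      by fastforce
    then show ?thesis unfolding two_subsets_def by blast
  qed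
  moreover have "finite (two_subsets (T i)) \<and> card (two_subsets (T i)) = m choose 2"
    if "i \<in> I" for i
    using assms(2)[OF that] n_subsets[of "T i" 2] unfolding two_subsets_def by simp
  ultimately show ?thesis
    using assms(1) by (simp add: card_UN_disjoint)
qed

definition mono_edge_set :: "('v \<Rightarrow> 'v \<Rightarrow> bool) \<Rightarrow> ('v \<Rightarrow> nat set) \<Rightarrow> 'v set set" where
  "mono_edge_set adj f = {{u, v} | u v. adj u v \<and> card (sumset (f u) (f v)) = 1}"

lemma mono_edges_eq_card: "mono_edges adj f = card (mono_edge_set adj f)"
  unfolding mono_edges_def mono_edge_set_def ..

lemma finite_mono_edge_set:
  assumes "finite V" "\<And>u v. adj u v \<Longrightarrow> u \<in> V \<and> v \<in> V"
  shows "finite (mono_edge_set adj f)"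
proof (rule finite_subset)
  show "mono_edge_set adj f \<subseteq> Pow V"
    unfolding mono_edge_set_def using assms(2) by blast
qed (use assms(1) in simp)

lemma sparing_number_eqI:
  assumes "weak_iasi V adj f" "mono_edges adj f = m"
    and "\<And>g. weak_iasi V adj g \<Longrightarrow> m \<le> mono_edges adj g"
  shows "sparing_number V adj = m"
  unfolding sparing_number_def using assms by (intro cInf_eq_minimum) auto

lemma weak_iasi_adj_card_eq_1:
  assumes "weak_iasi V adj f" "adj u v" "u \<in> V" "v \<in> V"
  shows "card (f u) = 1 \<or> card (f v) = 1"
proof (rule ccontr)
  assume "\<not> (card (f u) = 1 \<or> card (f v) = 1)"
  then have neither: "card (f u) \<noteq> 1" "card (f v) \<noteq> 1"
    by simp_all
  have fin: "finite (f x)" "f x \<noteq> {}" if "x \<in> V" for x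
    using assms(1) that unfolding weak_iasi_def iasi_def by auto
  have two: "card (f x) \<ge> 2" if "x \<in> V" "card (f x) \<noteq> 1" for x
  proof -
    have "card (f x) \<noteq> 0"
      using fin[OF that(1)] by simp
    with that(2) show ?thesis by linarith
  qed
  have "card (f u) < card (sumset (f u) (f v))"
    using card_sumset_gt[OF fin[OF assms(3)] fin(1)[OF assms(4)] two[OF assms(4) neither(2)]] .
  moreover have "card (f v) < card (sumset (f u) (f v))"
    using card_sumset_gt[OF fin[OF assms(4)] fin(1)[OF assms(3)] two[OF assms(3) neither(1)]]
    by (simp only: sumset_commute)
  moreover have "card (sumset (f u) (f v)) = max (card (f u)) (card (f v))"
    using assms(1,2) unfolding weak_iasi_def by blast
  ultimately show False
    by linarith
qed

lemma weak_iasi_clique_card_eq_1: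
  assumes "weak_iasi V adj f" "K \<subseteq> V" "K \<noteq> {}" "\<And>u v. u \<in> K \<Longrightarrow> v \<in> K \<Longrightarrow> u \<noteq> v \<Longrightarrow> adj u v"
  obtains w where "w \<in> K" "\<And>v. v \<in> K - {w} \<Longrightarrow> card (f v) = 1"
proof (cases "\<exists>w\<in>K. card (f w) \<noteq> 1")
  case True
  then obtain w where "w \<in> K" "card (f w) \<noteq> 1" by blast
  then show ?thesis
    using that weak_iasi_adj_card_eq_1[OF assms(1)] assms(2,4) by blast
next
  case False
  then show ?thesis using that assms(3) by blast
qed

lemma two_subsets_subset_mono_edge_set:
  assumes "\<And>u v. u \<in> S \<Longrightarrow> v \<in> S \<Longrightarrow> u \<noteq> v \<Longrightarrow> adj u v"
    and "\<And>v. v \<in> S \<Longrightarrow> card (f v) = 1"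
  shows "two_subsets S \<subseteq> mono_edge_set adj f"
proof
  fix A assume "A \<in> two_subsets S"
  then obtain u v where A: "A = {u, v}" "u \<noteq> v" "u \<in> S" "v \<in> S"
    unfolding two_subsets_def by (auto simp: card_2_iff)
  then obtain a b where "f u = {a}" "f v = {b}"
    using assms(2) by (meson card_1_singletonE)
  then have "card (sumset (f u) (f v)) = 1"
    by simp
  then show "A \<in> mono_edge_set adj f"
    unfolding mono_edge_set_def using A assms(1) by blast
qed

lemma weak_iasi_clique_mono_edges:
  assumes "weak_iasi V adj f" "K \<subseteq> V" "K \<noteq> {}"
    and "\<And>u v. u \<in> K \<Longrightarrow> v \<in> K \<Longrightarrow> u \<noteq> v \<Longrightarrow> adj u v"
  obtains w where "w \<in> K" "two_subsets (K - {w}) \<subseteq> mono_edge_set adj f"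
proof -
  obtain w where "w \<in> K" "\<And>v. v \<in> K - {w} \<Longrightarrow> card (f v) = 1"
    using weak_iasi_clique_card_eq_1[OF assms] by blast
  moreover have "two_subsets (K - {w}) \<subseteq> mono_edge_set adj f"
    by (rule two_subsets_subset_mono_edge_set) (use assms(4) calculation(2) in blast)+
  ultimately show thesis
    using that by blast
qed

definition pow2_labelling :: "'v \<Rightarrow> ('v \<Rightarrow> nat) \<Rightarrow> 'v \<Rightarrow> nat set" where
  "pow2_labelling c e v = (if v = c then {0, 1} else {2 ^ e v})"

lemma card_pow2_labelling: "card (pow2_labelling c e v) = (if v = c then 2 else 1)"
  by (simp add: pow2_labelling_def)

lemma sumset_pow2_labelling:
  assumes "u \<noteq> v"
  shows "sumset (pow2_labelling c e u) (pow2_labelling c e v) =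
    (if u = c then {2 ^ e v, 2 ^ e v + 1} else if v = c then {2 ^ e u, 2 ^ e u + 1}
     else {2 ^ e u + 2 ^ e v})"
  using assms by (cases "u = c") (simp_all add: pow2_labelling_def del: One_nat_def)

lemma card_sumset_pow2_labelling:
  assumes "u \<noteq> v"
  shows "card (sumset (pow2_labelling c e u) (pow2_labelling c e v)) = (if u = c \<or> v = c then 2 else 1)"
  using assms by (simp add: sumset_pow2_labelling)

(* With e c = 0 the centre contributes 2 ^ e c = 1, so the formula also covers edges at c. *)
lemma Max_sumset_pow2_labelling:
  assumes "u \<noteq> v" "e c = 0"
  shows "Max (sumset (pow2_labelling c e u) (pow2_labelling c e v)) = 2 ^ e u + 2 ^ e v"
  using assms by (simp add: sumset_pow2_labelling)

lemma inj_on_pow2_labelling: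
  assumes "inj_on e V"
  shows "inj_on (pow2_labelling c e) V"
proof (rule inj_onI)
  fix u v assume "u \<in> V" "v \<in> V" "pow2_labelling c e u = pow2_labelling c e v"
  moreover have "u = c \<longleftrightarrow> v = c"
    using arg_cong[OF \<open>pow2_labelling c e u = pow2_labelling c e v\<close>, of card]
    by (simp add: card_pow2_labelling split: if_splits)
  ultimately show "u = v"
    using inj_on_eq_iff[OF assms] by (auto simp: pow2_labelling_def split: if_splits)
qed

lemma weak_iasi_pow2_labelling:
  assumes "inj_on e V" "e c = 0" "\<And>u v. adj u v \<Longrightarrow> u \<in> V \<and> v \<in> V \<and> u \<noteq> v"
  shows "weak_iasi V adj (pow2_labelling c e)"
  unfolding weak_iasi_def iasi_def
proof (intro conjI allI impI ballI)
  fix u v x y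
  assume uv: "adj u v" and xy: "adj x y"
    and eq: "sumset (pow2_labelling c e u) (pow2_labelling c e v) =
             sumset (pow2_labelling c e x) (pow2_labelling c e y)"
  have "u \<noteq> v" "x \<noteq> y" "u \<in> V" "v \<in> V" "x \<in> V" "y \<in> V"
    using assms(3) uv xy by blast+
  have "(2::nat) ^ e u + 2 ^ e v = Max (sumset (pow2_labelling c e u) (pow2_labelling c e v))"
    using \<open>u \<noteq> v\<close> assms(2) by (rule Max_sumset_pow2_labelling[symmetric])
  also have "\<dots> = Max (sumset (pow2_labelling c e x) (pow2_labelling c e y))"
    by (simp only: eq)
  also have "\<dots> = 2 ^ e x + 2 ^ e y"
    using \<open>x \<noteq> y\<close> assms(2) by (rule Max_sumset_pow2_labelling)
  finally have "{e u, e v} = {e x, e y}"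
  proof (rule two_powers_sum_eqD)
    show "e u \<noteq> e v" "e x \<noteq> e y"
      using inj_on_eq_iff[OF assms(1)] \<open>u \<noteq> v\<close> \<open>x \<noteq> y\<close> \<open>u \<in> V\<close> \<open>v \<in> V\<close> \<open>x \<in> V\<close> \<open>y \<in> V\<close>
      by blast+
  qed
  then show "{u, v} = {x, y}"
    using inj_on_image_eq_iff[OF assms(1), of "{u, v}" "{x, y}"] \<open>u \<in> V\<close> \<open>v \<in> V\<close> \<open>x \<in> V\<close> \<open>y \<in> V\<close>
    by simp
next
  fix u v
  assume "adj u v"
  then have "u \<noteq> v"
    using assms(3) by blast
  then show "card (sumset (pow2_labelling c e u) (pow2_labelling c e v)) =
      max (card (pow2_labelling c e u)) (card (pow2_labelling c e v))"
    by (simp add: card_sumset_pow2_labelling card_pow2_labelling)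
qed (simp_all add: inj_on_pow2_labelling assms(1) pow2_labelling_def)

lemma mono_edge_set_pow2_labelling:
  assumes "\<And>u v. adj u v \<Longrightarrow> u \<noteq> v"
  shows "mono_edge_set adj (pow2_labelling c e) = {{u, v} | u v. adj u v \<and> u \<noteq> c \<and> v \<noteq> c}"
proof -
  have "card (sumset (pow2_labelling c e u) (pow2_labelling c e v)) = 1 \<longleftrightarrow> u \<noteq> c \<and> v \<noteq> c"
    if "adj u v" for u v
    using assms[OF that] by (simp add: card_sumset_pow2_labelling)
  then show ?thesis
    unfolding mono_edge_set_def by blast
qed

lemma windmill_adjD:
  "windmill_adj n r u v \<Longrightarrow> u \<in> windmill_V n r \<and> v \<in> windmill_V n r \<and> u \<noteq> v"
  unfolding windmill_adj_def by blast

lemma finite_windmill_V: "finite (windmill_V n r)"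
  unfolding windmill_V_def by simp

definition windmill_petal :: "nat \<Rightarrow> nat \<Rightarrow> (nat \<times> nat) set" where
  "windmill_petal n i = {i} \<times> {1..n - 1}"

lemma finite_windmill_petal: "finite (windmill_petal n i)"
  unfolding windmill_petal_def by simp

lemma card_windmill_petal: "card (windmill_petal n i) = n - 1"
  unfolding windmill_petal_def by (simp add: card_cartesian_product)

lemma windmill_petal_disjoint: "i \<noteq> k \<Longrightarrow> windmill_petal n i \<inter> windmill_petal n k = {}"
  unfolding windmill_petal_def by auto

definition windmill_blade :: "nat \<Rightarrow> nat \<Rightarrow> (nat \<times> nat) set" where
  "windmill_blade n i = insert (0, 0) (windmill_petal n i)"

lemma centre_notin_windmill_petal: "(0, 0) \<notin> windmill_petal n i"
  unfolding windmill_petal_def by simp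

lemma finite_windmill_blade: "finite (windmill_blade n i)"
  unfolding windmill_blade_def by (simp add: finite_windmill_petal)

lemma card_windmill_blade: "card (windmill_blade n i) = Suc (n - 1)"
  unfolding windmill_blade_def
  by (simp add: finite_windmill_petal centre_notin_windmill_petal card_windmill_petal)

lemma windmill_blade_inter: "i \<noteq> k \<Longrightarrow> windmill_blade n i \<inter> windmill_blade n k = {(0, 0)}"
  unfolding windmill_blade_def using windmill_petal_disjoint by blast

lemma windmill_blade_subset: "i \<in> {1..r} \<Longrightarrow> windmill_blade n i \<subseteq> windmill_V n r"
  unfolding windmill_blade_def windmill_petal_def windmill_V_def by auto

lemma windmill_blade_clique:
  assumes "i \<in> {1..r}" "u \<in> windmill_blade n i" "v \<in> windmill_blade n i" "u \<noteq> v"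
  shows "windmill_adj n r u v"
proof -
  have "fst u = i \<or> u = (0, 0)" "fst v = i \<or> v = (0, 0)"
    using assms(2,3) unfolding windmill_blade_def windmill_petal_def by auto
  then show ?thesis
    using assms windmill_blade_subset[OF assms(1)] unfolding windmill_adj_def by auto
qed

lemma windmill_edges_off_centre:
  "{{u, v} | u v. windmill_adj n r u v \<and> u \<noteq> (0, 0) \<and> v \<noteq> (0, 0)}
     = (\<Union>i\<in>{1..r}. two_subsets (windmill_petal n i))"
proof (intro equalityI subsetI)
  fix A assume "A \<in> {{u, v} | u v. windmill_adj n r u v \<and> u \<noteq> (0, 0) \<and> v \<noteq> (0, 0)}"
  then obtain u v where A: "A = {u, v}" "windmill_adj n r u v" "u \<noteq> (0, 0)" "v \<noteq> (0, 0)"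
    by blast
  then have "A \<subseteq> windmill_petal n (fst u)" "card A = 2" "fst u \<in> {1..r}"
    unfolding windmill_adj_def windmill_V_def windmill_petal_def by (auto simp: mem_Times_iff)
  then show "A \<in> (\<Union>i\<in>{1..r}. two_subsets (windmill_petal n i))"
    unfolding two_subsets_def by blast
next
  fix A assume "A \<in> (\<Union>i\<in>{1..r}. two_subsets (windmill_petal n i))"
  then obtain i u v where "i \<in> {1..r}" "A = {u, v}" "u \<noteq> v"
    "u \<in> windmill_petal n i" "v \<in> windmill_petal n i"
    unfolding two_subsets_def by (auto simp: card_2_iff)
  then show "A \<in> {{u, v} | u v. windmill_adj n r u v \<and> u \<noteq> (0, 0) \<and> v \<noteq> (0, 0)}"
    using windmill_blade_clique centre_notin_windmill_petal unfolding windmill_blade_def by blast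
qed

lemma windmill_mono_edges_ge:
  assumes "weak_iasi (windmill_V n r) (windmill_adj n r) f"
  shows "r * ((n - 1) choose 2) \<le> mono_edges (windmill_adj n r) f"
proof -
  let ?M = "mono_edge_set (windmill_adj n r) f"
  have "\<exists>w. w \<in> windmill_blade n i \<and> two_subsets (windmill_blade n i - {w}) \<subseteq> ?M"
    if i: "i \<in> {1..r}" for i
  proof -
    have "windmill_blade n i \<noteq> {}"
      unfolding windmill_blade_def by simp
    then show ?thesis
      using weak_iasi_clique_mono_edges[OF assms windmill_blade_subset[OF i] _ windmill_blade_clique[OF i]]
      by blast
  qed
  then obtain w where w: "\<And>i. i \<in> {1..r} \<Longrightarrow>
      w i \<in> windmill_blade n i \<and> two_subsets (windmill_blade n i - {w i}) \<subseteq> ?M"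
    by metis
  define T where "T i = windmill_blade n i - {w i}" for i
  have "r * ((n - 1) choose 2) = card (\<Union>i\<in>{1..r}. two_subsets (T i))"
  proof -
    have "card (\<Union>i\<in>{1..r}. two_subsets (T i)) = card {1..r} * ((n - 1) choose 2)"
    proof (rule card_UN_two_subsets)
      fix i assume "i \<in> {1..r}"
      then show "finite (T i) \<and> card (T i) = n - 1"
        using w unfolding T_def by (simp add: finite_windmill_blade card_windmill_blade)
    next
      fix i k :: nat assume "i \<noteq> k"
      have "card (T i \<inter> T k) \<le> card {(0::nat, 0::nat)}"
        by (rule card_mono) (use windmill_blade_inter[OF \<open>i \<noteq> k\<close>] in \<open>auto simp: T_def\<close>)
      then show "card (T i \<inter> T k) \<le> 1"
        by simp
    qed simp
    then show ?thesis
      by simp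
  qed
  also have "\<dots> \<le> card ?M"
  proof (rule card_mono)
    show "finite ?M"
      by (rule finite_mono_edge_set[OF finite_windmill_V[of n r]]) (simp add: windmill_adjD)
    show "(\<Union>i\<in>{1..r}. two_subsets (T i)) \<subseteq> ?M"
      using w unfolding T_def by blast
  qed
  finally show ?thesis
    unfolding mono_edges_eq_card .
qed

lemma windmill_mono_edges_pow2_labelling:
  "mono_edges (windmill_adj n r) (pow2_labelling (0, 0) prod_encode) = r * ((n - 1) choose 2)"
proof -
  have "mono_edges (windmill_adj n r) (pow2_labelling (0, 0) prod_encode)
      = card (\<Union>i\<in>{1..r}. two_subsets (windmill_petal n i))"
    unfolding mono_edges_eq_card windmill_edges_off_centre[symmetric]
    by (simp add: mono_edge_set_pow2_labelling windmill_adjD)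
  also have "\<dots> = r * ((n - 1) choose 2)"
    using card_UN_two_subsets[of "{1..r}" "windmill_petal n" "n - 1"]
    by (simp add: finite_windmill_petal card_windmill_petal windmill_petal_disjoint)
  finally show ?thesis .
qed

lemma of_nat_choose_two: "(of_nat (m choose 2) :: 'a::field_char_0) = of_nat m * of_nat (m - 1) / 2"
proof -
  have "even (m * (m - 1))"
    by (cases m) simp_all
  then have "2 * (m choose 2) = m * (m - 1)"
    by (simp add: choose_two)
  then show ?thesis
    by (metis nonzero_mult_div_cancel_left of_nat_mult of_nat_numeral zero_neq_numeral)
qed

theorem theorem2p15:
  fixes n r :: nat
  assumes "n \<ge> 2" and "r \<ge> 2"
  shows "(\<exists>f. weak_iasi (windmill_V n r) (windmill_adj n r) f) \<and>
         real (sparing_number (windmill_V n r) (windmill_adj n r))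
           = real r / 2 * real (n - 1) * real (n - 2)"
proof
  have "prod_encode (0, 0) = 0"
    by (simp add: prod_encode_def)
  then have weak: "weak_iasi (windmill_V n r) (windmill_adj n r) (pow2_labelling (0, 0) prod_encode)"
    by (rule weak_iasi_pow2_labelling[OF inj_prod_encode]) (simp_all add: windmill_adjD)
  then show "\<exists>f. weak_iasi (windmill_V n r) (windmill_adj n r) f"
    by blast
  have "sparing_number (windmill_V n r) (windmill_adj n r) = r * ((n - 1) choose 2)"
    using sparing_number_eqI[OF weak windmill_mono_edges_pow2_labelling] windmill_mono_edges_ge
    by blast
  moreover have "n - 2 = n - 1 - 1"
    by simp
  ultimately show "real (sparing_number (windmill_V n r) (windmill_adj n r))
      = real r / 2 * real (n - 1) * real (n - 2)"
    by (simp add: of_nat_choose_two)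
qed

end
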